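(* In the message-efficient $KT_0$ \textsc{SetCover} algorithm, until phase $\log(\Delta)/2$ the nodes send at most $\tilde{O}(n\sqrt{\Delta})$ messages with high probability.
   Context: Setting: a \textsc{SetCover} instance with $n$ elements, modeled as a bipartite communication graph with an edge between each set and each element it contains. $\Delta$ is the maximum degree, and the model is $KT_0$-\textsc{Congest}. Algorithm, phases $i=0,1,\dots$: - Set wake-up: each set draws $X_s$ with $\Pr[X_s\ge t]=2^{-t}$, capped at the phase length $4\log\Delta$. It waits $4\log\Delta-X_s$ rounds and then wakes up for one round. - Element messages: in each round, each uncovered element sends a message to $c\cdot8\log(n)\cdot 2^i/\Delta$ neighbors chosen uniformly at random, where $c>0$ is a constant. - Joining: a waking set that receives at least $c\cdot4\log(n)$ such messages joins the solution and notifies its elements (at most $\Delta$ messages), which become covered. $\tilde{O}$ hides polylogarithmic factors. "With high probability" means with probability at least $1-n^{-c}$. *)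

theory Defs
  imports "HOL-Probability.Probability"
begin

text \<open>A SetCover instance: finite set of sets S, each s covering elems s (a subset of
  the finite universe U). Communication graph: bipartite, set s adjacent to the elements
  of elems s.\<close>

definition nbrs :: "'s set \<Rightarrow> ('s \<Rightarrow> 'e set) \<Rightarrow> 'e \<Rightarrow> 's set" where
  "nbrs S elems e = {s \<in> S. e \<in> elems s}"

definition maxdeg :: "'s set \<Rightarrow> ('s \<Rightarrow> 'e set) \<Rightarrow> 'e set \<Rightarrow> nat" where
  "maxdeg S elems U =
     Max ((\<lambda>s. card (elems s)) ` S \<union> (\<lambda>e. card (nbrs S elems e)) ` U)"

definition phase_len :: "nat \<Rightarrow> nat" where
  "phase_len D = nat \<lceil>4 * log 2 (real D)\<rceil>"

text \<open>X with Pr[X >= t] = 2^(-t), capped at L.\<close>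
definition capped_geom :: "nat \<Rightarrow> nat pmf" where
  "capped_geom L = map_pmf (\<lambda>g. min g L) (geometric_pmf (1/2))"

definition msg_count :: "real \<Rightarrow> nat \<Rightarrow> nat \<Rightarrow> nat \<Rightarrow> real" where
  "msg_count c n D i = c * 8 * log 2 (real n) * 2 ^ i / real D"

text \<open>Sending to k neighbours chosen uniformly at random among the neighbours N
  (k possibly fractional: randomized rounding of k, then a uniformly random set of
  that many distinct neighbours; all neighbours if k exceeds the degree).\<close>
definition choose_targets :: "'s set \<Rightarrow> real \<Rightarrow> 's set pmf" where
  "choose_targets N k =
     bind_pmf (bernoulli_pmf (frac k)) (\<lambda>b.
       (let m = min (nat \<lfloor>k\<rfloor> + (if b then 1 else 0)) (card N)
        in pmf_of_set {T. T \<subseteq> N \<and> card T = m}))"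

text \<open>State: (covered elements, messages sent so far).
  w s is the round (within the phase) in which set s is awake.\<close>
definition round_step ::
  "'s set \<Rightarrow> ('s \<Rightarrow> 'e set) \<Rightarrow> 'e set \<Rightarrow> real \<Rightarrow> nat \<Rightarrow> ('s \<Rightarrow> nat) \<Rightarrow> nat
     \<Rightarrow> 'e set \<times> nat \<Rightarrow> ('e set \<times> nat) pmf" where
  "round_step S elems U c i w r st =
     (let n = card U; D = maxdeg S elems U; senders = U - fst st in
      bind_pmf (Pi_pmf senders {} (\<lambda>e. choose_targets (nbrs S elems e) (msg_count c n D i)))
        (\<lambda>T. let J = {s \<in> S. w s = r \<and>
                         real (card {e \<in> senders. s \<in> T e}) \<ge> c * 4 * log 2 (real n)}
             in return_pmf (fst st \<union> \<Union>(elems ` J),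
                            snd st + (\<Sum>e\<in>senders. card (T e)) + (\<Sum>s\<in>J. card (elems s)))))"

fun iterate_pmf :: "nat \<Rightarrow> (nat \<Rightarrow> 'a \<Rightarrow> 'a pmf) \<Rightarrow> 'a \<Rightarrow> 'a pmf" where
  "iterate_pmf 0 f x = return_pmf x"
| "iterate_pmf (Suc k) f x = bind_pmf (iterate_pmf k f x) (f k)"

definition phase_step ::
  "'s set \<Rightarrow> ('s \<Rightarrow> 'e set) \<Rightarrow> 'e set \<Rightarrow> real \<Rightarrow> nat \<Rightarrow> 'e set \<times> nat \<Rightarrow> ('e set \<times> nat) pmf" where
  "phase_step S elems U c i st =
     (let L = phase_len (maxdeg S elems U) in
      bind_pmf (Pi_pmf S 0 (\<lambda>_. capped_geom L))
        (\<lambda>X. iterate_pmf (Suc L) (\<lambda>r. round_step S elems U c i (\<lambda>s. L - X s) r) st))"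

definition run_until_half ::
  "'s set \<Rightarrow> ('s \<Rightarrow> 'e set) \<Rightarrow> 'e set \<Rightarrow> real \<Rightarrow> ('e set \<times> nat) pmf" where
  "run_until_half S elems U c =
     iterate_pmf (Suc (nat \<lfloor>log 2 (real (maxdeg S elems U)) / 2\<rfloor>))
       (phase_step S elems U c) ({}, 0)"

end

theory Submission
  imports Defs
begin

text \<open>In phase \<open>i \<le> log \<Delta> / 2\<close> every uncovered element sends \<open>k = 8 c log n 2\<^sup>i / \<Delta>\<close>
  messages per round, to independently chosen random sets of neighbours. Since
  \<open>E[2\<^bsup>|T|\<^esup>] \<le> 4\<^sup>k\<close> for each target set \<open>T\<close>, Markov's inequality applied to \<open>2\<^bsup>M\<^esup>\<close>
  shows that the number \<open>M\<close> of element messages in a round exceeds \<open>2nk + t\<close> with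
  probability at most \<open>2\<^bsup>-t\<^esup>\<close>. A set joins only after receiving \<open>\<theta> = 4 c log n\<close> of these
  messages, so at most \<open>M / \<theta>\<close> sets join, each sending at most \<open>min \<Delta> n\<close> notifications;
  as \<open>2\<^sup>i \<le> \<surd>\<Delta>\<close>, this is \<open>O(n\<surd>\<Delta> + n t)\<close>. A union bound over the \<open>O(log\<^sup>2 \<Delta>)\<close> rounds
  with \<open>t = c log n + log (#rounds)\<close> gives the claim.\<close>

lemma finite_subsets_card_eq: "finite N \<Longrightarrow> finite {T. T \<subseteq> N \<and> card T = m}"
  by (auto intro: finite_subset[OF _ finite_Collect_subsets])

lemma set_pmf_uniform_subsets_card_eq:
  assumes "finite N" "m \<le> card N"
  shows "set_pmf (pmf_of_set {T. T \<subseteq> N \<and> card T = m}) = {T. T \<subseteq> N \<and> card T = m}"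
proof (rule set_pmf_of_set)
  show "{T. T \<subseteq> N \<and> card T = m} \<noteq> {}"
    using obtain_subset_with_card_n[OF assms(2)] by blast
qed (rule finite_subsets_card_eq[OF assms(1)])

lemma set_pmf_choose_targets:
  assumes "finite N"
  shows "set_pmf (choose_targets N k) \<subseteq> Pow N"
  using assms unfolding choose_targets_def Let_def
  by (auto simp: set_pmf_uniform_subsets_card_eq)

lemma one_plus_le_four_powr:
  fixes p :: real
  assumes "0 \<le> p"
  shows "1 + p \<le> 4 powr p"
proof -
  have "1 \<le> ln (4::real)"
    using exp_le by (subst ln_ge_iff) auto
  have "1 + p \<le> exp p" by (rule exp_ge_add_one_self)
  also have "\<dots> \<le> exp (p * ln 4)"
    using mult_left_mono[OF \<open>1 \<le> ln 4\<close> assms] by simp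
  also have "\<dots> = 4 powr p" by (simp add: powr_def)
  finally show ?thesis .
qed

lemma expectation_choose_targets_two_pow_card:
  assumes "finite N" "0 \<le> k"
  shows "measure_pmf.expectation (choose_targets N k) (\<lambda>T. (2::real) ^ card T) \<le> 4 powr k"
proof -
  define p where "p = frac k"
  define f where "f = nat \<lfloor>k\<rfloor>"
  define m where "m b = min (f + (if b then 1 else 0)) (card N)" for b
  define Q where "Q b = pmf_of_set {T. T \<subseteq> N \<and> card T = m b}" for b
  have p: "0 \<le> p" "p \<le> 1"
    unfolding p_def using frac_lt_1[of k] frac_ge_0[of k] by auto
  have k: "k = real f + p"
    unfolding f_def p_def using assms(2) by (simp add: frac_def)
  have set_Q: "set_pmf (Q b) = {T. T \<subseteq> N \<and> card T = m b}" for b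
    unfolding Q_def using assms(1) by (intro set_pmf_uniform_subsets_card_eq) (auto simp: m_def)
  have expectation_Q: "measure_pmf.expectation (Q b) (\<lambda>T. (2::real) ^ card T) = 2 ^ m b" for b
  proof -
    have "measure_pmf.expectation (Q b) (\<lambda>T. (2::real) ^ card T)
        = measure_pmf.expectation (Q b) (\<lambda>_. 2 ^ m b)"
      by (intro integral_cong_AE) (auto simp: AE_measure_pmf_iff set_Q)
    then show ?thesis by simp
  qed
  have "choose_targets N k = bernoulli_pmf p \<bind> Q"
    unfolding choose_targets_def p_def f_def m_def Q_def Let_def by simp
  then have "measure_pmf.expectation (choose_targets N k) (\<lambda>T. (2::real) ^ card T)
      = (\<Sum>b\<in>UNIV. pmf (bernoulli_pmf p) b *\<^sub>R measure_pmf.expectation (Q b) (\<lambda>T. 2 ^ card T))"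
    using assms(1) by (simp only:) (rule pmf_expectation_bind, auto simp: set_Q)
  also have "\<dots> = p * 2 ^ m True + (1 - p) * 2 ^ m False"
    using p by (simp add: UNIV_bool expectation_Q)
  also have "\<dots> \<le> p * 2 ^ (f + 1) + (1 - p) * 2 ^ f"
    using p by (intro add_mono mult_left_mono power_increasing) (auto simp: m_def)
  also have "\<dots> = 2 ^ f * (1 + p)" by (simp add: algebra_simps)
  also have "\<dots> \<le> 4 ^ f * 4 powr p"
    using p by (intro mult_mono power_mono one_plus_le_four_powr) auto
  also have "\<dots> = 4 powr k"
    by (simp add: k powr_add powr_realpow)
  finally show ?thesis .
qed

lemma prob_gt_le_of_two_powr_moment:
  fixes P :: "'a pmf" and X :: "'a \<Rightarrow> real"
  assumes "integrable P (\<lambda>x. 2 powr X x)"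
    and "measure_pmf.expectation P (\<lambda>x. 2 powr X x) \<le> 2 powr a"
  shows "measure_pmf.prob P {x. X x > a + s} \<le> 2 powr (- s)"
proof -
  have "measure_pmf.prob P {x. X x > a + s}
      \<le> measure_pmf.prob P {x \<in> space P. 2 powr X x \<ge> 2 powr (a + s)}"
    by (intro measure_pmf.finite_measure_mono) auto
  also have "\<dots> \<le> measure_pmf.expectation P (\<lambda>x. 2 powr X x) / 2 powr (a + s)"
    by (rule integral_Markov_inequality_measure[OF assms(1), of "{}"]) auto
  also have "\<dots> \<le> 2 powr a / 2 powr (a + s)"
    by (intro divide_right_mono assms(2)) auto
  also have "\<dots> = 2 powr (- s)"
    by (simp add: powr_diff[symmetric])
  finally show ?thesis .
qed

lemma prob_Pi_choose_targets_sum_card_gt: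
  fixes N :: "'a \<Rightarrow> 'b set"
  assumes A: "finite A" "card A \<le> n" and N: "\<And>e. e \<in> A \<Longrightarrow> finite (N e)" and "0 \<le> k"
  shows "measure_pmf.prob (Pi_pmf A {} (\<lambda>e. choose_targets (N e) k))
           {T. real (\<Sum>e\<in>A. card (T e)) > 2 * real n * k + s} \<le> 2 powr (- s)"
proof -
  let ?P = "Pi_pmf A {} (\<lambda>e. choose_targets (N e) k)"
  have two_powr_sum: "(\<lambda>T. 2 powr real (\<Sum>e\<in>A. card (T e))) = (\<lambda>T. \<Prod>e\<in>A. (2::real) ^ card (T e))"
    by (simp add: powr_realpow power_sum del: of_nat_sum)
  have integrable: "integrable (choose_targets (N e) k) (\<lambda>T. (2::real) ^ card T)" if "e \<in> A" for e
    using set_pmf_choose_targets[OF N[OF that]] N[OF that]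
    by (intro integrable_measure_pmf_finite) (meson finite_Pow_iff finite_subset)
  have integrable_P: "integrable ?P (\<lambda>T. 2 powr real (\<Sum>e\<in>A. card (T e)))"
    unfolding two_powr_sum by (intro integrable_prod_Pi_pmf A integrable)
  have "measure_pmf.expectation ?P (\<lambda>T. 2 powr real (\<Sum>e\<in>A. card (T e)))
      = (\<Prod>e\<in>A. measure_pmf.expectation (choose_targets (N e) k) (\<lambda>T. (2::real) ^ card T))"
    unfolding two_powr_sum by (intro expectation_prod_Pi_pmf A integrable) auto
  also have "\<dots> \<le> (\<Prod>e\<in>A. 4 powr k)"
    by (intro prod_mono conjI integral_nonneg_AE AE_pmfI expectation_choose_targets_two_pow_card N
        \<open>0 \<le> k\<close>) auto
  also have "\<dots> = (2 powr 2) powr (k * card A)"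
    by (simp add: powr_realpow[symmetric] powr_powr)
  also have "\<dots> = 2 powr (2 * card A * k)"
    by (subst powr_powr) (simp add: mult_ac)
  also have "\<dots> \<le> 2 powr (2 * real n * k)"
    using A \<open>0 \<le> k\<close> by (intro powr_mono mult_right_mono) auto
  finally have "measure_pmf.expectation ?P (\<lambda>T. 2 powr real (\<Sum>e\<in>A. card (T e))) \<le> 2 powr (2 * real n * k)" .
  with integrable_P show ?thesis
    by (rule prob_gt_le_of_two_powr_moment)
qed

lemma card_heavy_le_sum_card:
  fixes T :: "'a \<Rightarrow> 'b set"
  assumes "finite X" "finite J" "\<And>e. e \<in> X \<Longrightarrow> finite (T e)"
    and heavy: "\<And>s. s \<in> J \<Longrightarrow> \<theta> \<le> real (card {e \<in> X. s \<in> T e})"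
  shows "\<theta> * real (card J) \<le> real (\<Sum>e\<in>X. card (T e))"
proof -
  have "\<theta> * real (card J) = (\<Sum>s\<in>J. \<theta>)" by simp
  also have "\<dots> \<le> (\<Sum>s\<in>J. real (card {e \<in> X. s \<in> T e}))"
    using heavy by (rule sum_mono)
  also have "\<dots> = real (\<Sum>e\<in>X. card {s \<in> J. s \<in> T e})"
    using sum.swap_restrict[OF assms(2,1), of "\<lambda>_ _. 1::nat" "\<lambda>s e. s \<in> T e"]
    by (simp flip: of_nat_sum)
  also have "\<dots> \<le> real (\<Sum>e\<in>X. card (T e))"
    using assms(3) by (intro of_nat_mono sum_mono card_mono) auto
  finally show ?thesis .
qed

lemma nbrs_subset: "nbrs S elems e \<subseteq> S"
  unfolding nbrs_def by blast

lemma finite_nbrs: "finite S \<Longrightarrow> finite (nbrs S elems e)"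
  using finite_subset[OF nbrs_subset] .

lemma card_elems_le_maxdeg:
  assumes "finite S" "finite U" "s \<in> S"
  shows "card (elems s) \<le> maxdeg S elems U"
  unfolding maxdeg_def using assms by (intro Max_ge) auto

lemma maxdeg_pos:
  assumes "finite S" "finite U" "\<Union>(elems ` S) = U" "U \<noteq> {}"
  shows "0 < maxdeg S elems U"
proof -
  obtain e s where "e \<in> U" "s \<in> S" "e \<in> elems s"
    using assms(3,4) by blast
  then have "0 < card (nbrs S elems e)"
    using finite_nbrs[OF assms(1)] by (auto simp: card_gt_0_iff nbrs_def)
  also have "card (nbrs S elems e) \<le> maxdeg S elems U"
    unfolding maxdeg_def using assms(1,2) \<open>e \<in> U\<close> by (intro Max_ge) auto
  finally show ?thesis .
qed

lemma prob_round_step_messages_gt: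
  fixes S :: "'s set" and elems :: "'s \<Rightarrow> 'e set" and i :: nat and t :: real
  assumes S: "finite S" and U: "finite U" and "c > 0" "2 \<le> card U"
    and m: "\<And>s. s \<in> S \<Longrightarrow> card (elems s) \<le> m"
  defines "M \<equiv> 2 * real (card U) * msg_count c (card U) (maxdeg S elems U) i + t"
    and "\<theta> \<equiv> c * 4 * log 2 (real (card U))"
  shows "measure_pmf.prob (round_step S elems U c i w r st)
           {y. real (snd y) > real (snd st) + (M + real m * M / \<theta>)} \<le> 2 powr (- t)"
proof -
  define k where "k = msg_count c (card U) (maxdeg S elems U) i"
  define X where "X = U - fst st"
  define P where "P = Pi_pmf X {} (\<lambda>e. choose_targets (nbrs S elems e) k)"
  define J where "J T = {s \<in> S. w s = r \<and> real (card {e \<in> X. s \<in> T e}) \<ge> \<theta>}" for T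
  define out where "out T = (fst st \<union> \<Union>(elems ` J T),
      snd st + (\<Sum>e\<in>X. card (T e)) + (\<Sum>s\<in>J T. card (elems s)))" for T
  have "log 2 (real (card U)) > 0"
    using \<open>2 \<le> card U\<close> by simp
  then have "\<theta> > 0" "0 \<le> k"
    using \<open>c > 0\<close> unfolding \<theta>_def k_def msg_count_def by simp_all
  have X: "finite X" "card X \<le> card U"
    unfolding X_def using U by (simp_all add: card_mono)
  have round_step: "round_step S elems U c i w r st = map_pmf out P"
    unfolding round_step_def map_pmf_def out_def J_def P_def X_def k_def \<theta>_def Let_def ..
  have out_le: "real (snd (out T)) \<le> real (snd st) + (M + real m * M / \<theta>)"
    if T: "T \<in> set_pmf P" and sum_le: "real (\<Sum>e\<in>X. card (T e)) \<le> M" for T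
  proof -
    have T_sub: "T e \<subseteq> S" if "e \<in> X" for e
    proof -
      have "T e \<in> set_pmf (choose_targets (nbrs S elems e) k)"
        using T that X(1) by (auto simp: P_def set_Pi_pmf PiE_dflt_def)
      moreover have "finite (nbrs S elems e)" using finite_nbrs[OF S] .
      ultimately have "T e \<subseteq> nbrs S elems e"
        using set_pmf_choose_targets by blast
      then show ?thesis using nbrs_subset by (rule order_trans)
    qed
    have J_sub: "J T \<subseteq> S" unfolding J_def by blast
    have "\<theta> * real (card (J T)) \<le> real (\<Sum>e\<in>X. card (T e))"
      using finite_subset[OF J_sub S] finite_subset[OF T_sub S]
      by (intro card_heavy_le_sum_card[OF X(1)]) (simp_all add: J_def)
    then have "real (card (J T)) \<le> M / \<theta>"
      using sum_le \<open>\<theta> > 0\<close> by (simp add: pos_le_divide_eq mult.commute)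
    have "(\<Sum>s\<in>J T. card (elems s)) \<le> card (J T) * m"
      using sum_bounded_above[of "J T" "\<lambda>s. card (elems s)" m] J_sub m by auto
    then have "real (\<Sum>s\<in>J T. card (elems s)) \<le> real (card (J T)) * real m"
      unfolding of_nat_mult[symmetric] of_nat_le_iff .
    also have "\<dots> \<le> M / \<theta> * real m"
      using \<open>real (card (J T)) \<le> M / \<theta>\<close> by (rule mult_right_mono) simp
    also have "\<dots> = real m * M / \<theta>" by simp
    finally have "real (\<Sum>s\<in>J T. card (elems s)) \<le> real m * M / \<theta>" .
    with sum_le show ?thesis
      unfolding out_def snd_conv of_nat_add by linarith
  qed
  have "measure_pmf.prob (round_step S elems U c i w r st)
          {y. real (snd y) > real (snd st) + (M + real m * M / \<theta>)}
      = measure_pmf.prob P {T. real (snd (out T)) > real (snd st) + (M + real m * M / \<theta>)}"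
    unfolding round_step measure_map_pmf by (simp add: vimage_def)
  also have "\<dots> \<le> measure_pmf.prob P {T. real (\<Sum>e\<in>X. card (T e)) > 2 * real (card U) * k + t}"
    using out_le unfolding M_def k_def
    by (intro measure_pmf.finite_measure_mono_AE AE_pmfI) (auto simp: not_less[symmetric])
  also have "\<dots> \<le> 2 powr (- t)"
    unfolding P_def using X finite_nbrs[OF S] \<open>0 \<le> k\<close>
    by (rule prob_Pi_choose_targets_sum_card_gt)
  finally show ?thesis .
qed

lemma prob_bind_pmf_le:
  assumes "0 \<le> \<epsilon>" and "\<And>x. x \<in> set_pmf p \<Longrightarrow> x \<notin> A \<Longrightarrow> measure_pmf.prob (f x) B \<le> \<epsilon>"
  shows "measure_pmf.prob (bind_pmf p f) B \<le> measure_pmf.prob p A + \<epsilon>"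
proof -
  have "emeasure (bind_pmf p f) B = (\<integral>\<^sup>+x. emeasure (f x) B \<partial>p)"
    by simp
  also have "\<dots> \<le> (\<integral>\<^sup>+x. indicator A x + ennreal \<epsilon> \<partial>p)"
  proof (intro nn_integral_mono_AE AE_pmfI)
    fix x assume "x \<in> set_pmf p"
    then show "emeasure (f x) B \<le> indicator A x + ennreal \<epsilon>"
      using assms(2)[of x] measure_pmf.emeasure_le_1[of "f x" B]
      by (cases "x \<in> A") (auto simp: measure_pmf.emeasure_eq_measure intro: add_increasing2 ennreal_leI)
  qed
  also have "\<dots> = emeasure p A + ennreal \<epsilon>"
    by (simp add: nn_integral_add measure_pmf.emeasure_space_1)
  finally show ?thesis
    using assms(1) by (simp add: measure_pmf.emeasure_eq_measure flip: ennreal_plus)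
qed

lemma prob_iterate_pmf_increase_gt:
  fixes f :: "nat \<Rightarrow> 'a \<Rightarrow> 'a pmf" and g :: "'a \<Rightarrow> real"
  assumes "0 \<le> \<epsilon>" and step: "\<And>r z. r < k \<Longrightarrow> measure_pmf.prob (f r z) {y. g y > g z + b} \<le> \<epsilon>"
  shows "measure_pmf.prob (iterate_pmf k f x) {y. g y > g x + real k * b} \<le> real k * \<epsilon>"
  using step
proof (induction k)
  case 0
  then show ?case by simp
next
  case (Suc k)
  let ?A = "{y. g y > g x + real k * b}"
  have "measure_pmf.prob (iterate_pmf (Suc k) f x) {y. g y > g x + real (Suc k) * b}
      \<le> measure_pmf.prob (iterate_pmf k f x) ?A + \<epsilon>"
    unfolding iterate_pmf.simps
  proof (rule prob_bind_pmf_le[OF \<open>0 \<le> \<epsilon>\<close>])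
    fix z assume "z \<notin> ?A"
    then have "{y. g y > g x + real (Suc k) * b} \<subseteq> {y. g y > g z + b}"
      by (auto simp: algebra_simps)
    then show "measure_pmf.prob (f k z) {y. g y > g x + real (Suc k) * b} \<le> \<epsilon>"
      using Suc.prems[of k z] measure_pmf.finite_measure_mono by (fastforce intro: order_trans)
  qed
  also have "\<dots> \<le> real k * \<epsilon> + \<epsilon>"
    using Suc by simp
  finally show ?case by (simp add: algebra_simps)
qed

definition total_rounds :: "nat \<Rightarrow> nat" where
  "total_rounds D = Suc (nat \<lfloor>log 2 (real D) / 2\<rfloor>) * Suc (phase_len D)"

lemma total_rounds_pos: "0 < total_rounds D"
  by (simp add: total_rounds_def)

lemma prob_phase_step_messages_gt:
  assumes "0 \<le> \<epsilon>"
    and round: "\<And>w r z. measure_pmf.prob (round_step S elems U c i w r z)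
                  {y. real (snd y) > real (snd z) + b} \<le> \<epsilon>"
  defines "L \<equiv> Suc (phase_len (maxdeg S elems U))"
  shows "measure_pmf.prob (phase_step S elems U c i x)
           {y. real (snd y) > real (snd x) + real L * b} \<le> real L * \<epsilon>"
proof -
  have "measure_pmf.prob (phase_step S elems U c i x) {y. real (snd y) > real (snd x) + real L * b}
      \<le> measure_pmf.prob (Pi_pmf S 0 (\<lambda>_. capped_geom (phase_len (maxdeg S elems U)))) {}
          + real L * \<epsilon>"
    unfolding phase_step_def Let_def L_def using \<open>0 \<le> \<epsilon>\<close>
    by (intro prob_bind_pmf_le prob_iterate_pmf_increase_gt[where g = "\<lambda>y. real (snd y)"] round) auto
  then show ?thesis by simp
qed

lemma prob_run_until_half_messages_gt:
  assumes "0 \<le> \<epsilon>"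
    and round: "\<And>i w r z. i \<le> nat \<lfloor>log 2 (real (maxdeg S elems U)) / 2\<rfloor> \<Longrightarrow>
                  measure_pmf.prob (round_step S elems U c i w r z)
                    {y. real (snd y) > real (snd z) + b} \<le> \<epsilon>"
  defines "R \<equiv> total_rounds (maxdeg S elems U)"
  shows "measure_pmf.prob (run_until_half S elems U c) {y. real (snd y) > real R * b} \<le> real R * \<epsilon>"
proof -
  define p where "p = nat \<lfloor>log 2 (real (maxdeg S elems U)) / 2\<rfloor>"
  define L where "L = Suc (phase_len (maxdeg S elems U))"
  have "measure_pmf.prob (iterate_pmf (Suc p) (phase_step S elems U c) ({}, 0))
          {y. real (snd y) > real (snd ({} :: 'b set, 0 :: nat)) + real (Suc p) * (real L * b)}
      \<le> real (Suc p) * (real L * \<epsilon>)"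
    unfolding L_def using \<open>0 \<le> \<epsilon>\<close>
    by (intro prob_iterate_pmf_increase_gt[where g = "\<lambda>y. real (snd y)"] prob_phase_step_messages_gt round)
      (auto simp: p_def)
  then show ?thesis
    unfolding run_until_half_def R_def total_rounds_def p_def[symmetric] L_def[symmetric] of_nat_mult
    by (simp only: snd_conv of_nat_0 add_0_left mult.assoc)
qed

definition round_budget :: "real \<Rightarrow> nat \<Rightarrow> nat \<Rightarrow> real \<Rightarrow> real" where
  "round_budget c n D s =
     real n * (16 * c * log 2 (real n) + 4 * sqrt (real D) + (1 + 1 / (4 * c)) * s)"

lemma two_pow_le_sqrt_of_le_half_log:
  assumes "0 < D" "i \<le> nat \<lfloor>log 2 (real D) / 2\<rfloor>"
  shows "(2::real) ^ i \<le> sqrt (real D)"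
proof -
  have "0 \<le> log 2 (real D) / 2" using assms(1) by simp
  have "real i \<le> real (nat \<lfloor>log 2 (real D) / 2\<rfloor>)" using assms(2) by simp
  also have "\<dots> = of_int \<lfloor>log 2 (real D) / 2\<rfloor>" using \<open>0 \<le> log 2 (real D) / 2\<close> by simp
  also have "\<dots> \<le> log 2 (real D) / 2" by (rule of_int_floor_le)
  finally have "(2::real) ^ i \<le> 2 powr (log 2 (real D) / 2)"
    by (simp add: powr_realpow[symmetric])
  also have "\<dots> = (2 powr log 2 (real D)) powr (1/2)" by (simp add: powr_powr)
  also have "\<dots> = sqrt (real D)" using assms(1) by (simp add: powr_half_sqrt)
  finally show ?thesis .
qed

lemma round_threshold_le_round_budget:
  fixes c t :: real and n D m i :: nat
  assumes "c > 0" "2 \<le> n" "0 < D" "2 ^ i \<le> sqrt (real D)" "0 \<le> t" "m \<le> D" "m \<le> n"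
  defines "M \<equiv> 2 * real n * msg_count c n D i + t" and "\<theta> \<equiv> c * 4 * log 2 (real n)"
  shows "M + real m * M / \<theta> \<le> round_budget c n D t"
proof -
  define l where "l = log 2 (real n)"
  have "1 \<le> l" unfolding l_def using assms(2) by simp
  have "sqrt (real D) \<le> real D"
    using assms(3) real_sqrt_le_mono[of "real D" "real D * real D"] by simp
  then have "(2::real) ^ i \<le> real D"
    using assms(4) by linarith
  then have "2 ^ i / real D \<le> 1"
    using assms(3) by simp
  have elem_msgs: "2 * real n * msg_count c n D i = 16 * c * real n * l * (2 ^ i / real D)"
    unfolding msg_count_def l_def by simp
  have "2 * real n * msg_count c n D i \<le> 16 * c * real n * l"
    unfolding elem_msgs using \<open>2 ^ i / real D \<le> 1\<close> \<open>c > 0\<close> \<open>1 \<le> l\<close> by (intro mult_left_le) auto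
  moreover have "real m * (2 * real n * msg_count c n D i) / \<theta> \<le> 4 * real n * sqrt (real D)"
  proof -
    have "real m * (2 * real n * msg_count c n D i) / \<theta> = 4 * real n * 2 ^ i * (real m / real D)"
      unfolding elem_msgs \<theta>_def l_def using \<open>c > 0\<close> \<open>1 \<le> l\<close> by (simp add: l_def field_simps)
    also have "\<dots> \<le> 4 * real n * 2 ^ i"
      using assms(3,6) by (intro mult_left_le) auto
    also have "\<dots> \<le> 4 * real n * sqrt (real D)"
      using assms(4) by (intro mult_left_mono) auto
    finally show ?thesis .
  qed
  moreover have "real m * t / \<theta> \<le> real n * t / (4 * c)"
  proof -
    have "real m * t / \<theta> \<le> real n * t / \<theta>"
      using assms(5,7) \<open>c > 0\<close> \<open>1 \<le> l\<close> unfolding \<theta>_def l_def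
      by (intro divide_right_mono mult_right_mono) auto
    also have "\<dots> \<le> real n * t / (4 * c)"
      using assms(5) \<open>c > 0\<close> \<open>1 \<le> l\<close> unfolding \<theta>_def l_def
      by (intro divide_left_mono) (auto simp: mult_ac)
    finally show ?thesis .
  qed
  moreover have "t \<le> real n * t"
    using assms(2,5) by (simp add: mult_le_cancel_right1)
  moreover have "M + real m * M / \<theta> = 2 * real n * msg_count c n D i + t
      + real m * (2 * real n * msg_count c n D i) / \<theta> + real m * t / \<theta>"
    unfolding M_def by (simp add: algebra_simps add_divide_distrib)
  moreover have "round_budget c n D t
      = 16 * c * real n * l + 4 * real n * sqrt (real D) + real n * t + real n * t / (4 * c)"
    unfolding round_budget_def l_def by (simp add: algebra_simps)
  ultimately show ?thesis by linarith
qed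

lemma log2_le_self: "log 2 (real (R::nat)) \<le> real R"
proof (cases "R = 0")
  case False
  have "real R < 2 ^ R"
    using less_exp[of R] by (metis of_nat_less_iff of_nat_numeral of_nat_power)
  then have "log 2 (real R) < log 2 (2 ^ R)"
    using False by (subst log_less_cancel_iff) auto
  then show ?thesis by (simp add: log_nat_power)
qed (simp add: log_def)

lemma total_rounds_le:
  assumes "0 < D"
  shows "real (total_rounds D) \<le> 4 * (1 + log 2 (real D))\<^sup>2"
proof -
  define lD where "lD = log 2 (real D)"
  have "0 \<le> lD" unfolding lD_def using assms by simp
  have "real (nat \<lfloor>lD / 2\<rfloor>) = of_int \<lfloor>lD / 2\<rfloor>" "real (nat \<lceil>4 * lD\<rceil>) = of_int \<lceil>4 * lD\<rceil>"
    using \<open>0 \<le> lD\<close> by simp_all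
  then have "real (Suc (nat \<lfloor>lD / 2\<rfloor>)) \<le> 1 + lD"
    and "real (Suc (phase_len D)) \<le> 4 * (1 + lD)"
    unfolding phase_len_def lD_def[symmetric]
    using \<open>0 \<le> lD\<close> of_int_floor_le[of "lD / 2"] ceiling_correct[of "4 * lD"] by simp_all
  then have "real (total_rounds D) \<le> (1 + lD) * (4 * (1 + lD))"
    unfolding total_rounds_def lD_def[symmetric] of_nat_mult
    by (intro mult_mono) auto
  then show ?thesis by (simp add: lD_def power2_eq_square algebra_simps)
qed

lemma mult_two_powr_neg_log:
  fixes x y c :: real
  assumes "0 < x" "0 < y"
  shows "x * 2 powr - (c * log 2 y + log 2 x) = y powr - c"
proof -
  have "(2::real) powr - (c * log 2 y) = (2 powr log 2 y) powr - c"
    by (simp add: powr_powr mult.commute)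
  then have "(2::real) powr - (c * log 2 y) = y powr - c"
    using assms(2) by simp
  then show ?thesis
    using assms(1) by (simp add: powr_diff powr_minus_divide diff_conv_add_uminus[symmetric])
qed

lemma total_rounds_mult_round_budget_le:
  fixes c :: real and n D :: nat
  assumes "c > 0" "2 \<le> n" "0 < D"
  defines "s \<equiv> c * log 2 (real n) + log 2 (real (total_rounds D))"
    and "\<Lambda> \<equiv> 1 + log 2 (real n) + log 2 (real D)"
  shows "real (total_rounds D) * round_budget c n D s
           \<le> 4 * (16 * c + 4 + (1 + 1 / (4 * c)) * (c + 4)) * real n * sqrt (real D) * \<Lambda> ^ 4"
proof -
  define K where "K = 16 * c + 4 + (1 + 1 / (4 * c)) * (c + 4)"
  have l: "1 \<le> log 2 (real n)" using assms(2) by simp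
  have lD: "0 \<le> log 2 (real D)" using assms(3) by simp
  have "1 \<le> \<Lambda>" unfolding \<Lambda>_def using l lD by simp
  then have "\<Lambda> \<le> \<Lambda>\<^sup>2" by (simp add: power2_eq_square)
  have "1 \<le> sqrt (real D)" using assms(3) by simp
  have "(1 + log 2 (real D))\<^sup>2 \<le> \<Lambda>\<^sup>2"
    unfolding \<Lambda>_def using l lD by (intro power_mono) auto
  then have R: "real (total_rounds D) \<le> 4 * \<Lambda>\<^sup>2"
    using total_rounds_le[OF assms(3)] by linarith
  have "c * log 2 (real n) \<le> c * \<Lambda>"
    unfolding \<Lambda>_def using \<open>c > 0\<close> lD by (intro mult_left_mono) auto
  then have "s \<le> c * \<Lambda> + 4 * \<Lambda>\<^sup>2"
    using log2_le_self[of "total_rounds D"] R unfolding s_def by linarith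
  moreover have "c * \<Lambda> \<le> c * \<Lambda>\<^sup>2"
    using \<open>c > 0\<close> \<open>\<Lambda> \<le> \<Lambda>\<^sup>2\<close> by (intro mult_left_mono) auto
  ultimately have s: "s \<le> (c + 4) * \<Lambda>\<^sup>2"
    by (simp add: distrib_right)
  have "16 * c * log 2 (real n) + 4 * sqrt (real D) + (1 + 1 / (4 * c)) * s
      \<le> 16 * c * (\<Lambda>\<^sup>2 * sqrt (real D)) + 4 * (\<Lambda>\<^sup>2 * sqrt (real D))
         + (1 + 1 / (4 * c)) * ((c + 4) * (\<Lambda>\<^sup>2 * sqrt (real D)))"
  proof -
    have "1 \<le> \<Lambda>\<^sup>2" using \<open>1 \<le> \<Lambda>\<close> \<open>\<Lambda> \<le> \<Lambda>\<^sup>2\<close> by linarith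
    have "\<Lambda>\<^sup>2 \<le> \<Lambda>\<^sup>2 * sqrt (real D)"
      using \<open>1 \<le> sqrt (real D)\<close> by (simp add: mult_le_cancel_left1)
    moreover have "sqrt (real D) \<le> \<Lambda>\<^sup>2 * sqrt (real D)"
      using \<open>1 \<le> \<Lambda>\<^sup>2\<close> by (simp add: mult_le_cancel_right1)
    moreover have "log 2 (real n) \<le> \<Lambda>\<^sup>2 * sqrt (real D)"
      using \<open>\<Lambda>\<^sup>2 \<le> \<Lambda>\<^sup>2 * sqrt (real D)\<close> \<open>\<Lambda> \<le> \<Lambda>\<^sup>2\<close> lD unfolding \<Lambda>_def by linarith
    ultimately show ?thesis
      using s \<open>c > 0\<close>
      by (intro add_mono mult_left_mono order_trans[OF s mult_left_mono]) auto
  qed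
  also have "\<dots> = K * \<Lambda>\<^sup>2 * sqrt (real D)"
    unfolding K_def using \<open>c > 0\<close> by (simp add: field_simps)
  finally have budget: "round_budget c n D s \<le> real n * (K * \<Lambda>\<^sup>2 * sqrt (real D))"
    unfolding round_budget_def by (intro mult_left_mono) auto
  have "0 \<le> log 2 (real (total_rounds D))"
    using total_rounds_pos[of D] by simp
  then have "0 \<le> round_budget c n D s"
    using \<open>c > 0\<close> l
    unfolding round_budget_def s_def by (intro mult_nonneg_nonneg add_nonneg_nonneg) auto
  then have "real (total_rounds D) * round_budget c n D s \<le> 4 * \<Lambda>\<^sup>2 * (real n * (K * \<Lambda>\<^sup>2 * sqrt (real D)))"
    using R budget by (intro mult_mono) auto
  then show ?thesis
    unfolding K_def by (simp add: power4_eq_xxxx power2_eq_square mult_ac)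
qed

lemma prob_round_step_messages_gt_round_budget:
  fixes S :: "'s set" and elems :: "'s \<Rightarrow> 'e set"
  assumes S: "finite S" and U: "finite U" and "\<forall>s\<in>S. elems s \<subseteq> U" "\<Union>(elems ` S) = U"
    and "c > 0" "2 \<le> card U" "0 \<le> t" "i \<le> nat \<lfloor>log 2 (real (maxdeg S elems U)) / 2\<rfloor>"
  shows "measure_pmf.prob (round_step S elems U c i w r z)
           {y. real (snd y) > real (snd z) + round_budget c (card U) (maxdeg S elems U) t}
         \<le> 2 powr (- t)"
proof -
  define D where "D = maxdeg S elems U"
  \<comment> \<open>\<open>D\<close> alone is not enough: it also bounds element degrees and may exceed \<open>card U\<close>\<close>
  define m where "m = min D (card U)"
  define M where "M = 2 * real (card U) * msg_count c (card U) D i + t"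
  have "0 < D"
    unfolding D_def using assms(4,6) by (intro maxdeg_pos S U) auto
  have m: "card (elems s) \<le> m" if "s \<in> S" for s
    unfolding m_def D_def using that assms(3) card_elems_le_maxdeg[OF S U] card_mono[OF U] by auto
  have "M + real m * M / (c * 4 * log 2 (real (card U))) \<le> round_budget c (card U) D t"
    unfolding M_def using assms(5-8) \<open>0 < D\<close> two_pow_le_sqrt_of_le_half_log
    by (intro round_threshold_le_round_budget) (auto simp: m_def D_def)
  then have "measure_pmf.prob (round_step S elems U c i w r z)
           {y. real (snd y) > real (snd z) + round_budget c (card U) D t}
      \<le> measure_pmf.prob (round_step S elems U c i w r z)
           {y. real (snd y) > real (snd z) + (M + real m * M / (c * 4 * log 2 (real (card U))))}"
    by (intro measure_pmf.finite_measure_mono) auto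
  also have "\<dots> \<le> 2 powr (- t)"
    unfolding M_def D_def using S U assms(5,6) m by (rule prob_round_step_messages_gt)
  finally show ?thesis unfolding D_def .
qed

lemma prob_le_ge_one_minus:
  fixes P :: "'a pmf" and X :: "'a \<Rightarrow> real"
  assumes "measure_pmf.prob P {x. X x > a} \<le> \<delta>" "a \<le> b"
  shows "measure_pmf.prob P {x. X x \<le> b} \<ge> 1 - \<delta>"
proof -
  have "1 - \<delta> \<le> measure_pmf.prob P (UNIV - {x. X x > a})"
    using assms(1) measure_pmf.prob_compl[of "{x. X x > a}" P] by simp
  also have "\<dots> \<le> measure_pmf.prob P {x. X x \<le> b}"
    using assms(2) by (intro measure_pmf.finite_measure_mono) auto
  finally show ?thesis .
qed

lemma prob_run_until_half_messages_le:
  fixes S :: "'s set" and elems :: "'s \<Rightarrow> 'e set" and c :: real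
  assumes S: "finite S" and U: "finite U" and "\<forall>s\<in>S. elems s \<subseteq> U" "\<Union>(elems ` S) = U"
    and "2 \<le> card U" "c > 0"
  defines "n \<equiv> card U" and "D \<equiv> maxdeg S elems U"
  shows "measure_pmf.prob (run_until_half S elems U c)
           {st. real (snd st) \<le> 4 * (16 * c + 4 + (1 + 1 / (4 * c)) * (c + 4)) * real n * sqrt (real D)
                  * (1 + log 2 (real n) + log 2 (real D)) ^ 4}
         \<ge> 1 - real n powr (- c)"
proof -
  define R where "R = total_rounds D"
  define t where "t = c * log 2 (real n) + log 2 (real R)"
  have "0 < D"
    unfolding D_def using assms(4,5) by (intro maxdeg_pos S U) auto
  have "0 \<le> t"
    unfolding t_def R_def n_def using \<open>c > 0\<close> \<open>2 \<le> card U\<close> total_rounds_pos[of D] by simp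
  have "measure_pmf.prob (run_until_half S elems U c)
          {y. real (snd y) > real R * round_budget c n D t} \<le> real R * 2 powr (- t)"
    unfolding R_def D_def n_def using S U assms(3-6) \<open>0 \<le> t\<close>
    by (intro prob_run_until_half_messages_gt prob_round_step_messages_gt_round_budget) auto
  also have "real R * 2 powr (- t) = real n powr (- c)"
    unfolding t_def using total_rounds_pos[of D] \<open>2 \<le> card U\<close>
    by (intro mult_two_powr_neg_log) (auto simp: R_def n_def)
  finally show ?thesis
    using total_rounds_mult_round_budget_le[OF \<open>c > 0\<close> \<open>2 \<le> card U\<close> \<open>0 < D\<close>]
    unfolding R_def t_def n_def by (rule prob_le_ge_one_minus)
qed

theorem mainTheorem8:
  fixes c :: real
  assumes "c > 0"
  shows "\<exists>C0 K N0. \<forall>(S :: 's set) (elems :: 's \<Rightarrow> 'e set) (U :: 'e set).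
           finite S \<and> finite U \<and> (\<forall>s\<in>S. elems s \<subseteq> U) \<and> \<Union>(elems ` S) = U \<and>
           card U \<ge> N0 \<longrightarrow>
           measure_pmf.prob (run_until_half S elems U c)
             {st. real (snd st) \<le> C0 * real (card U) * sqrt (real (maxdeg S elems U)) *
                    (1 + log 2 (real (card U)) + log 2 (real (maxdeg S elems U))) ^ K}
           \<ge> 1 - real (card U) powr (- c)"
  using prob_run_until_half_messages_le[OF _ _ _ _ _ assms] by blast

end
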